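(* Let $A\in\mathbb{R}^{n\times n}$, $B\in\mathbb{R}^{n\times m}$, $Q=Q^T\geqslant 0$, $R=R^T>0$, with $(A,B)$ controllable and $(A,\sqrt{Q})$ observable. Let $\widetilde{K}_0\in\mathbb{R}^{m\times n}$ be arbitrary, $c_0=1$, and $b>\rho(A-B\widetilde{K}_0)$. For $i=0,1,2,\ldots$, let $\widetilde{P}_i$ be the solution of $$\frac{\prod_{j=0}^i c_j^2}{b^2}(A-B\widetilde{K}_i)^T\widetilde{P}_i(A-B\widetilde{K}_i)-\widetilde{P}_i+Q+\widetilde{K}_i^TR\widetilde{K}_i=0,$$ let $\widetilde{K}_{i+1}=\big(B^T\widetilde{P}_iB+\frac{b^2}{\prod_{j=0}^i c_j^2}R\big)^{-1}B^T\widetilde{P}_iA$, set $\mathcal{Q}_i=\widetilde{P}_i-Q-\widetilde{K}_{i+1}^TR\widetilde{K}_{i+1}$, and let the scaling factor $c_{i+1}$ satisfy $$c_{i+1}=1\ \text{ if } \mathcal{Q}_i \text{ is non-invertible},\qquad 1<c_{i+1}<\sigma(\widetilde{P}_i\mathcal{Q}_i^{-1})^{1/2}\ \text{ if } \mathcal{Q}_i \text{ is invertible}.$$ Then, for each $i=0,1,2,\ldots$, with the gain $\widetilde{K}_{i+1}$ so obtained, the Lyapunov equation at step $i+1$, $$\frac{\prod_{j=0}^{i+1} c_j^2}{b^2}(A-B\widetilde{K}_{i+1})^T\widetilde{P}_{i+1}(A-B\widetilde{K}_{i+1})-\widetilde{P}_{i+1}+Q+\widetilde{K}_{i+1}^TR\widetilde{K}_{i+1}=0,$$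 has a unique positive definite solution $\widetilde{P}_{i+1}$.
   Context: $\rho(Y)$ is the spectral radius of a square matrix $Y$. $\sigma(Y)$ denotes the minimum singular value of $Y$ and $\sigma(Y)^{1/2}$ its square root. Positive definiteness refers to symmetric matrices. *)

theory Defs
  imports "HOL-Analysis.Analysis"
begin

primrec mpow :: "real^'n^'n \<Rightarrow> nat \<Rightarrow> real^'n^'n" where
  "mpow A 0 = mat 1"
| "mpow A (Suc k) = A ** mpow A k"

definition psd :: "real^'n^'n \<Rightarrow> bool" where
  "psd M \<longleftrightarrow> transpose M = M \<and> (\<forall>x. 0 \<le> x \<bullet> (M *v x))"

definition pos_def :: "real^'n^'n \<Rightarrow> bool" where
  "pos_def M \<longleftrightarrow> transpose M = M \<and> (\<forall>x. x \<noteq> 0 \<longrightarrow> 0 < x \<bullet> (M *v x))"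

definition msqrt :: "real^'n^'n \<Rightarrow> real^'n^'n" where
  "msqrt Q = (THE S. psd S \<and> S ** S = Q)"

definition cmat :: "real^'n^'m \<Rightarrow> complex^'n^'m" where
  "cmat A = (\<chi> i j. complex_of_real (A $ i $ j))"

definition spectral_radius :: "real^'n^'n \<Rightarrow> real" where
  "spectral_radius A = Max {cmod z | z. \<exists>v::complex^'n. v \<noteq> 0 \<and> cmat A *v v = z *s v}"

definition sigma_min :: "real^'n^'n \<Rightarrow> real" where
  "sigma_min Y = sqrt (Min {l. \<exists>x. x \<noteq> 0 \<and> (transpose Y ** Y) *v x = l *\<^sub>R x})"

definition controllable :: "real^'n^'n \<Rightarrow> real^'m^'n \<Rightarrow> bool" where
  "controllable A B \<longleftrightarrow>
     span (\<Union>k\<in>{..<CARD('n)}. range (\<lambda>u. (mpow A k ** B) *v u)) = UNIV"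

definition observable :: "real^'n^'n \<Rightarrow> real^'n^'p \<Rightarrow> bool" where
  "observable A C \<longleftrightarrow>
     (\<forall>x. (\<forall>k<CARD('n). (C ** mpow A k) *v x = 0) \<longrightarrow> x = 0)"

definition lyap_eq ::
  "real^'n^'n \<Rightarrow> real^'m^'n \<Rightarrow> real^'n^'n \<Rightarrow> real^'m^'m \<Rightarrow> real \<Rightarrow> (nat \<Rightarrow> real)
     \<Rightarrow> nat \<Rightarrow> real^'n^'m \<Rightarrow> real^'n^'n \<Rightarrow> bool" where
  "lyap_eq A B Q R b c i Ki X \<longleftrightarrow>
     ((\<Prod>j\<le>i. (c j)^2) / b^2) *\<^sub>R (transpose (A - B ** Ki) ** X ** (A - B ** Ki))
       - X + Q + transpose Ki ** R ** Ki = 0"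

end

(*
  Write g_j = (c_0 ... c_j)^2 / b^2 and F_j = A - B K_j.  The equation at step j says
  X - F' X F = Q + K_j' R K_j for F = sqrt g_j F_j, so it has a unique solution once sqrt g_j F_j
  is Schur stable, and this solution is positive definite because (A, sqrt Q) is observable.
  Stability is propagated along the iteration.  For j = 0 it is b > rho(A - B K_0).  If it holds
  at step j, then P_j > 0 and completing the square shows that the new gain satisfies
  g_j F_(j+1)' P_j F_(j+1) <= P_j - Q - K_(j+1)' R K_(j+1).  When the right-hand side is
  invertible, the bound on c_(j+1) by the minimal singular value makes x' P_j x strictly
  decrease along sqrt g_(j+1) F_(j+1); otherwise c_(j+1) = 1 and it decreases by
  x' (Q + K_(j+1)' R K_(j+1)) x, which observability makes strict over n steps.  Either way
  x' P_j x is a Lyapunov function for sqrt g_(j+1) F_(j+1).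
*)

theory Submission
  imports Defs "Jordan_Normal_Form.Spectral_Radius"
begin

no_notation Matrix.vec_index (infixl "$" 100)
no_notation Matrix.scalar_prod (infix "\<bullet>" 70)
hide_const (open) Matrix.mat Matrix.vec Matrix.orthogonal VectorSpace.subspace
  Spectral_Radius.spectrum Spectral_Radius.spectral_radius
hide_fact (open) Matrix.vec_eq_iff Matrix.mat_def Matrix.orthogonal_def

section \<open>Matrix algebra\<close>

lemma mpow_Suc_right: "mpow A (Suc k) = mpow A k ** A"
  by (induction k) (simp_all add: matrix_mul_assoc)

lemma mpow_add: "mpow A (k + l) = mpow A k ** mpow A l"
  by (induction k) (simp_all add: matrix_mul_assoc)

lemma mpow_scaleR: "mpow (s *\<^sub>R A) k = s ^ k *\<^sub>R mpow (A::real^'n^'n) k"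
  by (induction k) (simp_all add: matrix_scalar_ac scalar_matrix_assoc[symmetric])

lemma matrix_add_rdistrib: "((B::'a::semiring_1^'n^'m) + C) ** A = B ** A + C ** A"
  by (simp add: matrix_matrix_mult_def vec_eq_iff sum.distrib distrib_right)

lemma transpose_add: "transpose (A + B) = transpose A + transpose (B::'a::semiring_1^'n^'m)"
  by (simp add: transpose_def vec_eq_iff)

lemma transpose_diff: "transpose (A - B) = transpose A - transpose (B::'a::ring_1^'n^'m)"
  by (simp add: transpose_def vec_eq_iff)

lemma transpose_sum: "transpose (sum f S) = (\<Sum>i\<in>S. transpose (f i :: 'a::semiring_1^'n^'m))"
  by (induction S rule: infinite_finite_induct)
    (simp_all add: transpose_add transpose_def vec_eq_iff)

lemma scaleR_matrix_vector_mult: "(c *\<^sub>R A) *v x = c *\<^sub>R (A *v x :: real^'m)"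
  by (simp add: scaleR_matrix_vector_assoc)

lemma matrix_sum_vector_mult: "sum f S *v x = (\<Sum>i\<in>S. f i *v (x::real^'n))"
  by (induction S rule: infinite_finite_induct) (simp_all add: matrix_vector_mult_add_rdistrib)

lemma inner_transpose_mult: "x \<bullet> (transpose A *v y) = (A *v x) \<bullet> (y::real^'m)"
  by (metis dot_lmul_matrix inner_commute transpose_matrix_vector)

lemma inner_matrix_sandwich:
  "x \<bullet> ((transpose F ** X ** G) *v y) = (F *v x) \<bullet> (X *v (G *v (y::real^'n)))"
  by (simp only: matrix_vector_mul_assoc[symmetric] inner_transpose_mult)

lemma symmetric_inner_commute: "transpose M = M \<Longrightarrow> x \<bullet> (M *v y) = (M *v x) \<bullet> (y::real^'n)"
  by (metis inner_transpose_mult)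

lemma matrix_inv_right: "invertible A \<Longrightarrow> A ** matrix_inv A = mat 1"
  and matrix_inv_left: "invertible A \<Longrightarrow> matrix_inv A ** A = mat 1"
  unfolding invertible_def matrix_inv_def by (metis (mono_tags, lifting) someI_ex)+

lemma matrix_eq_on_span:
  fixes A C :: "real^'n^'m"
  assumes "span E = UNIV" and "\<And>e. e \<in> E \<Longrightarrow> A *v e = C *v e"
  shows "A = C"
proof -
  have "A *v x = C *v x" for x
  proof -
    have "x \<in> span E"
      using assms(1) by simp
    then show ?thesis
      using linear_eq_on_span[OF matrix_vector_mul_linear matrix_vector_mul_linear, of E] assms(2)
      by blast
  qed
  then show ?thesis
    by (simp add: matrix_eq)
qed

lemma psd_nonneg: "psd M \<Longrightarrow> 0 \<le> x \<bullet> (M *v x)"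
  by (simp add: psd_def)

lemma pos_def_imp_psd: "pos_def M \<Longrightarrow> psd M"
  unfolding pos_def_def psd_def by (metis inner_zero_left less_eq_real_def)

section \<open>Eigenvalues and spectral radius via Jordan normal forms\<close>

definition schur_stable :: "real^'n^'n \<Rightarrow> bool" where
  "schur_stable F \<longleftrightarrow> (\<forall>x. (\<lambda>k. mpow F k *v x) \<longlonglongrightarrow> 0)"

definition cart_index :: "nat \<Rightarrow> 'n::finite" where
  "cart_index = (SOME f. bij_betw f {..<CARD('n)} UNIV)"

definition cart_pos :: "'n::finite \<Rightarrow> nat" where
  "cart_pos = inv_into {..<CARD('n)} cart_index"

lemma bij_cart_index: "bij_betw (cart_index :: nat \<Rightarrow> 'n::finite) {..<CARD('n)} UNIV"
proof -
  have "\<exists>f. bij_betw f {..<CARD('n)} (UNIV :: 'n set)"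
    using ex_bij_betw_nat_finite[of "UNIV :: 'n set"] by (auto simp: atLeast0LessThan)
  then show ?thesis
    unfolding cart_index_def by (rule someI_ex)
qed

lemma cart_index_pos [simp]: "cart_index (cart_pos a) = (a::'n::finite)"
  unfolding cart_pos_def by (rule bij_betw_inv_into_right[OF bij_cart_index]) simp

lemma cart_pos_less [simp]: "cart_pos (a::'n::finite) < CARD('n)"
proof -
  have "cart_pos a \<in> {..<CARD('n)}"
    unfolding cart_pos_def using bij_cart_index[where 'n = 'n]
    by (intro inv_into_into) (auto simp: bij_betw_def)
  then show ?thesis
    by simp
qed

lemma cart_pos_index [simp]: "i < CARD('n) \<Longrightarrow> cart_pos (cart_index i :: 'n::finite) = i"
  unfolding cart_pos_def by (rule bij_betw_inv_into_left[OF bij_cart_index]) simp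

lemma sum_cart_index: "(\<Sum>i<CARD('n). h (cart_index i)) = (\<Sum>a\<in>UNIV. h (a::'n::finite))"
  using sum.reindex_bij_betw[OF bij_cart_index, of h] by simp

text \<open>Transfer to the matrices of \<^theory>\<open>Jordan_Normal_Form.Matrix\<close>, enumerating the index type
  by \<^const>\<open>cart_index\<close>.\<close>

definition jnf_mat :: "real^'n^'n \<Rightarrow> complex mat" where
  "jnf_mat X =
     Matrix.mat CARD('n) CARD('n) (\<lambda>(i, j). complex_of_real (X $ cart_index i $ cart_index j))"

definition jnf_vec :: "complex^'n \<Rightarrow> complex Matrix.vec" where
  "jnf_vec v = Matrix.vec CARD('n) (\<lambda>i. v $ cart_index i)"

lemma jnf_mat_dim [simp]:
  "dim_row (jnf_mat (X::real^'n^'n)) = CARD('n)" "dim_col (jnf_mat X) = CARD('n)"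
  by (simp_all add: jnf_mat_def)

lemma jnf_mat_carrier [simp]: "jnf_mat (X::real^'n^'n) \<in> carrier_mat CARD('n) CARD('n)"
  by (simp add: jnf_mat_def)

lemma jnf_vec_carrier [simp]: "jnf_vec (v::complex^'n) \<in> carrier_vec CARD('n)"
  by (simp add: jnf_vec_def)

lemma jnf_vec_index [simp]: "i < CARD('n) \<Longrightarrow> vec_index (jnf_vec v) i = v $ (cart_index i :: 'n::finite)"
  by (simp add: jnf_vec_def)

lemma jnf_mat_index [simp]:
  "i < CARD('n) \<Longrightarrow> j < CARD('n) \<Longrightarrow>
    jnf_mat X $$ (i, j) = complex_of_real (X $ cart_index i $ (cart_index j :: 'n::finite))"
  by (simp add: jnf_mat_def)

lemma jnf_mat_mult: "jnf_mat (X ** Y) = jnf_mat X * jnf_mat (Y::real^'n^'n)"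
proof (rule eq_matI)
  fix i j assume "i < dim_row (jnf_mat X * jnf_mat Y)" "j < dim_col (jnf_mat X * jnf_mat Y)"
  then have i: "i < CARD('n)" and j: "j < CARD('n)"
    by (simp_all add: jnf_mat_def)
  have "(jnf_mat X * jnf_mat Y) $$ (i, j) =
      (\<Sum>l<CARD('n). complex_of_real (X $ cart_index i $ cart_index l * Y $ cart_index l $ cart_index j))"
    using i j by (simp add: jnf_mat_def scalar_prod_def lessThan_atLeast0)
  also have "\<dots> = (\<Sum>a\<in>UNIV. complex_of_real (X $ cart_index i $ a * Y $ a $ cart_index j))"
    by (rule sum_cart_index)
  also have "\<dots> = jnf_mat (X ** Y) $$ (i, j)"
    using i j by (simp add: jnf_mat_def matrix_matrix_mult_def)
  finally show "jnf_mat (X ** Y) $$ (i, j) = (jnf_mat X * jnf_mat Y) $$ (i, j)"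
    by simp
qed (simp_all add: jnf_mat_def)

lemma jnf_mat_one: "jnf_mat (mat 1 :: real^'n^'n) = 1\<^sub>m CARD('n)"
proof (rule eq_matI)
  fix i j assume "i < dim_row (1\<^sub>m CARD('n) :: complex mat)" "j < dim_col (1\<^sub>m CARD('n) :: complex mat)"
  then have i: "i < CARD('n)" and j: "j < CARD('n)"
    by simp_all
  then have "cart_index i = (cart_index j :: 'n) \<longleftrightarrow> i = j"
    by (metis cart_pos_index)
  then show "jnf_mat (mat 1 :: real^'n^'n) $$ (i, j) = 1\<^sub>m CARD('n) $$ (i, j)"
    using i j by (simp add: jnf_mat_def mat_def)
qed (simp_all add: jnf_mat_def)

lemma jnf_mat_mpow: "jnf_mat (mpow X k) = jnf_mat (X::real^'n^'n) ^\<^sub>m k"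
proof (induction k)
  case 0
  then show ?case
    by (simp add: jnf_mat_one)
next
  case (Suc k)
  then show ?case
    by (simp only: mpow_Suc_right jnf_mat_mult pow_mat.simps)
qed

lemma jnf_mat_mult_vec: "jnf_mat X *\<^sub>v jnf_vec v = jnf_vec (cmat (X::real^'n^'n) *v v)"
proof (rule eq_vecI)
  fix i assume "i < dim_vec (jnf_vec (cmat X *v v))"
  then have i: "i < CARD('n)"
    by (simp add: jnf_vec_def)
  have "vec_index (jnf_mat X *\<^sub>v jnf_vec v) i =
      (\<Sum>l<CARD('n). complex_of_real (X $ cart_index i $ cart_index l) * v $ cart_index l)"
    using i by (simp add: jnf_mat_def jnf_vec_def scalar_prod_def lessThan_atLeast0)
  also have "\<dots> = (\<Sum>a\<in>UNIV. complex_of_real (X $ cart_index i $ a) * v $ a)"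
    by (rule sum_cart_index)
  finally show "vec_index (jnf_mat X *\<^sub>v jnf_vec v) i = vec_index (jnf_vec (cmat X *v v)) i"
    using i by (simp add: cmat_def matrix_vector_mult_def)
qed (simp add: jnf_mat_def jnf_vec_def)

lemma jnf_vec_smult: "jnf_vec (z *s v) = z \<cdot>\<^sub>v jnf_vec v"
  by (rule eq_vecI) (simp_all add: jnf_vec_def)

lemma jnf_vec_inject: "jnf_vec v = jnf_vec w \<longleftrightarrow> v = (w::complex^'n)"
proof
  assume vw: "jnf_vec v = jnf_vec w"
  have "v $ a = w $ a" for a
    using arg_cong[OF vw, of "\<lambda>u. vec_index u (cart_pos a)"] by simp
  then show "v = w"
    by (simp add: vec_eq_iff)
qed simp

lemma jnf_vec_zero: "jnf_vec (0::complex^'n) = 0\<^sub>v CARD('n)"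
  by (rule eq_vecI) (simp_all add: jnf_vec_def)

lemma jnf_vec_surj: "u \<in> carrier_vec CARD('n) \<Longrightarrow> u = jnf_vec (\<chi> a::'n::finite. vec_index u (cart_pos a))"
  by (rule eq_vecI) (simp_all add: jnf_vec_def)

lemma eigenvalue_jnf_mat_iff:
  "eigenvalue (jnf_mat X) z \<longleftrightarrow> (\<exists>v::complex^'n. v \<noteq> 0 \<and> cmat (X::real^'n^'n) *v v = z *s v)"
proof
  assume "eigenvalue (jnf_mat X) z"
  then obtain u where u: "u \<in> carrier_vec CARD('n)" "u \<noteq> 0\<^sub>v CARD('n)" "jnf_mat X *\<^sub>v u = z \<cdot>\<^sub>v u"
    unfolding eigenvalue_def eigenvector_def by auto
  obtain v :: "complex^'n" where v: "u = jnf_vec v"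
    using jnf_vec_surj[OF u(1)] by blast
  have "cmat X *v v = z *s v"
    using u(3) by (simp add: v jnf_mat_mult_vec flip: jnf_vec_smult jnf_vec_inject)
  moreover have "v \<noteq> 0"
    using u(2) by (auto simp: v jnf_vec_zero)
  ultimately show "\<exists>v. v \<noteq> 0 \<and> cmat X *v v = z *s v"
    by blast
next
  assume "\<exists>v::complex^'n. v \<noteq> 0 \<and> cmat X *v v = z *s v"
  then obtain v :: "complex^'n" where "v \<noteq> 0" "cmat X *v v = z *s v"
    by blast
  moreover have "jnf_vec v \<noteq> 0\<^sub>v CARD('n)"
    using \<open>v \<noteq> 0\<close> by (metis jnf_vec_inject jnf_vec_zero)
  ultimately show "eigenvalue (jnf_mat X) z"
    unfolding eigenvalue_def eigenvector_def
    by (intro exI[of _ "jnf_vec v"]) (simp add: jnf_mat_mult_vec jnf_vec_smult)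
qed

lemma spectrum_jnf_mat:
  "Spectral_Radius.spectrum (jnf_mat X) =
    {z. \<exists>v::complex^'n. v \<noteq> 0 \<and> cmat (X::real^'n^'n) *v v = z *s v}"
  by (simp add: Spectral_Radius.spectrum_def eigenvalue_jnf_mat_iff set_eq_iff)

lemma spectral_radius_jnf_mat:
  "spectral_radius X = Spectral_Radius.spectral_radius (jnf_mat (X::real^'n^'n))"
  unfolding Defs.spectral_radius_def Spectral_Radius.spectral_radius_def spectrum_jnf_mat
  by (simp add: setcompr_eq_image)

lemma finite_complex_eigenvalues:
  "finite {z. \<exists>v::complex^'n. v \<noteq> 0 \<and> cmat (X::real^'n^'n) *v v = z *s v}"
  using card_finite_spectrum(1)[OF jnf_mat_carrier, of X] by (simp add: spectrum_jnf_mat)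

lemma complex_eigenvalue_exists:
  "{z. \<exists>v::complex^'n. v \<noteq> 0 \<and> cmat (X::real^'n^'n) *v v = z *s v} \<noteq> {}"
  using spectrum_non_empty[OF jnf_mat_carrier, of X] by (simp add: spectrum_jnf_mat)

lemma finite_real_eigenvalues: "finite {l. \<exists>x. x \<noteq> 0 \<and> Y *v x = l *\<^sub>R (x::real^'n)}"
proof -
  let ?E = "{l. \<exists>x. x \<noteq> 0 \<and> Y *v x = l *\<^sub>R (x::real^'n)}"
  let ?c = "\<lambda>x::real^'n. \<chi> i. complex_of_real (x $ i)"
  have "complex_of_real ` ?E \<subseteq> {z. \<exists>v::complex^'n. v \<noteq> 0 \<and> cmat Y *v v = z *s v}"
  proof
    fix z assume "z \<in> complex_of_real ` ?E"
    then obtain l x where z: "z = complex_of_real l" and x: "x \<noteq> 0" "Y *v x = l *\<^sub>R x"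
      by blast
    have "cmat Y *v ?c x = ?c (Y *v x)"
      by (simp add: vec_eq_iff cmat_def matrix_vector_mult_def)
    also have "\<dots> = z *s ?c x"
      by (simp add: x(2) z vec_eq_iff)
    finally have "cmat Y *v ?c x = z *s ?c x" .
    moreover have "?c x \<noteq> 0"
      using x(1) by (simp add: vec_eq_iff)
    ultimately show "z \<in> {z. \<exists>v. v \<noteq> 0 \<and> cmat Y *v v = z *s v}"
      by blast
  qed
  then have "finite (complex_of_real ` ?E)"
    using finite_complex_eigenvalues finite_subset by blast
  then show ?thesis
    by (rule finite_imageD) (simp add: inj_on_def)
qed

lemma spectral_radius_nonneg: "0 \<le> spectral_radius (X::real^'n^'n)"
  using spectral_radius_mem_max(1)[OF jnf_mat_carrier, of X] by (auto simp: spectral_radius_jnf_mat)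

lemma cmat_scaleR_mult: "cmat (s *\<^sub>R X) *v v = complex_of_real s *s (cmat (X::real^'n^'m) *v v)"
  by (simp add: cmat_def matrix_vector_mult_def vec_eq_iff sum_distrib_left mult.assoc)

lemma spectral_radius_scaleR:
  assumes "0 < s"
  shows "spectral_radius (s *\<^sub>R X) = s * spectral_radius (X::real^'n^'n)"
proof -
  define E where "E Y = {z. \<exists>v::complex^'n. v \<noteq> 0 \<and> cmat Y *v v = z *s v}" for Y :: "real^'n^'n"
  have "E (s *\<^sub>R X) = (\<lambda>z. complex_of_real s * z) ` E X"
  proof (rule equalityI; rule subsetI)
    fix z assume "z \<in> E (s *\<^sub>R X)"
    then obtain v where "v \<noteq> 0" "complex_of_real s *s (cmat X *v v) = z *s v"
      by (auto simp: E_def cmat_scaleR_mult)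
    then have "v \<noteq> 0" "cmat X *v v = (z / complex_of_real s) *s v"
      using assms by (simp_all add: vec_eq_iff field_simps)
    then show "z \<in> (\<lambda>z. complex_of_real s * z) ` E X"
      using assms by (auto simp: E_def intro!: image_eqI[of _ _ "z / complex_of_real s"])
  next
    fix z assume "z \<in> (\<lambda>z. complex_of_real s * z) ` E X"
    then show "z \<in> E (s *\<^sub>R X)"
      by (auto simp: E_def cmat_scaleR_mult vec_eq_iff)
  qed
  then have "cmod ` E (s *\<^sub>R X) = (\<lambda>r. s * r) ` cmod ` E X"
    using assms by (auto simp: image_image norm_mult)
  moreover have "Max ((\<lambda>r. s * r) ` cmod ` E X) = s * Max (cmod ` E X)"
    using assms finite_complex_eigenvalues[of X] complex_eigenvalue_exists[of X]
    by (intro mono_Max_commute[symmetric]) (auto simp: E_def mono_def)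
  ultimately show ?thesis
    unfolding Defs.spectral_radius_def by (simp add: setcompr_eq_image E_def)
qed

lemma schur_stable_if_spectral_radius_less_1:
  assumes "spectral_radius X < 1"
  shows "schur_stable (X::real^'n^'n)"
proof -
  define r where "r = (spectral_radius X + 1) / 2"
  have r: "0 < r" "r < 1" "spectral_radius X < r"
    using assms spectral_radius_nonneg[of X] by (simp_all add: r_def)
  define N where "N = (1 / r) *\<^sub>R X"
  have "spectral_radius N < 1"
    using r by (simp add: N_def spectral_radius_scaleR field_simps)
  then obtain C where C: "\<And>k. norm_bound (jnf_mat N ^\<^sub>m k) C"
    using spectral_radius_jnf_norm_bound_less_1_upper_triangular[OF jnf_mat_carrier]
    by (auto simp: spectral_radius_jnf_mat)
  \<comment> \<open>The powers of \<open>N = X / r\<close> are bounded by the Jordan normal form, so \<open>X\<^sup>k = r\<^sup>k N\<^sup>k\<close> decays.\<close>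
  have bound: "\<bar>mpow N k $ a $ j\<bar> \<le> C" for k a j
    using C[of k, unfolded norm_bound_def, rule_format, of "cart_pos a" "cart_pos j"]
    by (simp flip: jnf_mat_mpow)
  have X: "X = r *\<^sub>R N"
    using r by (simp add: N_def)
  show ?thesis
    unfolding schur_stable_def
  proof (intro allI vec_tendstoI)
    fix x :: "real^'n" and a
    define D where "D = (\<Sum>j\<in>UNIV. C * \<bar>x $ j\<bar>)"
    have bound_x: "norm ((mpow X k *v x) $ a) \<le> r ^ k * D" for k
    proof -
      have "\<bar>\<Sum>j\<in>UNIV. mpow N k $ a $ j * x $ j\<bar> \<le> D"
        unfolding D_def using bound
        by (intro order_trans[OF sum_abs] sum_mono) (simp add: abs_mult mult_right_mono)
      then show ?thesis
        using r by (simp add: X mpow_scaleR matrix_vector_mult_def abs_mult sum_distrib_left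
            mult.assoc mult_left_mono flip: sum_distrib_left)
    qed
    have "(\<lambda>k. r ^ k * D) \<longlonglongrightarrow> 0"
      using r by (intro tendsto_mult_left_zero LIMSEQ_power_zero) simp
    then show "(\<lambda>k. (mpow X k *v x) $ a) \<longlonglongrightarrow> 0 $ a"
      using Lim_null_comparison[OF always_eventually[OF allI[OF bound_x]]] by simp
  qed
qed

lemma schur_stable_if_spectral_radius_less:
  assumes "spectral_radius X < b"
  shows "schur_stable ((1 / b) *\<^sub>R (X::real^'n^'n))"
proof -
  have "0 < b"
    using assms spectral_radius_nonneg[of X] by linarith
  then show ?thesis
    using assms by (intro schur_stable_if_spectral_radius_less_1) (simp add: spectral_radius_scaleR)
qed

section \<open>Symmetric and positive semidefinite matrices\<close>

lemma quadratic_form_eq_0_imp_mult_eq_0: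
  fixes N :: "real^'n^'n"
  assumes sym: "transpose N = N" and V: "subspace V"
    and nonneg: "\<And>x. x \<in> V \<Longrightarrow> 0 \<le> x \<bullet> (N *v x)"
    and v: "v \<in> V" "N *v v \<in> V" "v \<bullet> (N *v v) = 0"
  shows "N *v v = 0"
proof (rule ccontr)
  assume ne: "N *v v \<noteq> 0"
  let ?w = "N *v v"
  let ?a = "?w \<bullet> (N *v ?w)"
  have a: "0 \<le> ?a"
    using nonneg v(2) by blast
  have w: "0 < ?w \<bullet> ?w"
    using ne by simp
  \<comment> \<open>Along the line \<open>v - t N v\<close> the form is \<open>t (t a - 2 |N v|\<^sup>2)\<close>, negative for small \<open>t > 0\<close>.\<close>
  define t where "t = (?w \<bullet> ?w) / (?a + 1)"
  have t: "0 < t"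
    using w a by (simp add: t_def)
  have "v - t *\<^sub>R ?w \<in> V"
    using V v by (simp add: subspace_diff subspace_scale)
  then have "0 \<le> (v - t *\<^sub>R ?w) \<bullet> (N *v (v - t *\<^sub>R ?w))"
    by (rule nonneg)
  also have "\<dots> = v \<bullet> (N *v v) - t * (v \<bullet> (N *v ?w)) - t * (?w \<bullet> ?w) + t * t * ?a"
    by (simp add: matrix_vector_mult_diff_distrib matrix_vector_mult_scaleR inner_diff_left
        inner_diff_right algebra_simps)
  also have "v \<bullet> (N *v ?w) = ?w \<bullet> ?w"
    using symmetric_inner_commute[OF sym] by simp
  finally have "0 \<le> t * (t * ?a - 2 * (?w \<bullet> ?w))"
    using v(3) by (simp add: algebra_simps)
  moreover have "t * ?a < 2 * (?w \<bullet> ?w)"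
  proof -
    have "t * ?a = (?w \<bullet> ?w) * (?a / (?a + 1))"
      by (simp add: t_def)
    also have "\<dots> < (?w \<bullet> ?w) * 1"
      using w a by (intro mult_strict_left_mono) auto
    finally show ?thesis
      using w by linarith
  qed
  ultimately show False
    using t mult_pos_neg[of t "t * ?a - 2 * (?w \<bullet> ?w)"] by linarith
qed

lemma symmetric_min_eigenvector_in_invariant_subspace:
  fixes M :: "real^'n^'n"
  assumes sym: "transpose M = M" and V: "subspace V" and inv: "\<And>x. x \<in> V \<Longrightarrow> M *v x \<in> V"
    and x0: "x0 \<in> V" "x0 \<noteq> 0"
  shows "\<exists>l v. v \<in> V \<and> norm v = 1 \<and> M *v v = l *\<^sub>R v \<and> (\<forall>x\<in>V. l * (x \<bullet> x) \<le> x \<bullet> (M *v x))"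
proof -
  let ?S = "sphere 0 1 \<inter> V"
  have "compact ?S"
    using closed_subspace[OF V] by (intro compact_Int_closed) auto
  moreover have "x0 /\<^sub>R norm x0 \<in> ?S"
    using x0 V by (auto simp: subspace_scale)
  moreover have "continuous_on ?S (\<lambda>x. x \<bullet> (M *v x))"
    by (intro continuous_intros linear_continuous_on) auto
  ultimately obtain v where v: "v \<in> ?S" and vmin: "\<And>y. y \<in> ?S \<Longrightarrow> v \<bullet> (M *v v) \<le> y \<bullet> (M *v y)"
    using continuous_attains_inf[of ?S] by blast
  define l where "l = v \<bullet> (M *v v)"
  have lower: "l * (x \<bullet> x) \<le> x \<bullet> (M *v x)" if "x \<in> V" for x
  proof (cases "x = 0")
    case False
    have "x /\<^sub>R norm x \<in> ?S"
      using that False V by (auto simp: subspace_scale)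
    then have "l \<le> (x /\<^sub>R norm x) \<bullet> (M *v (x /\<^sub>R norm x))"
      using vmin l_def by blast
    also have "\<dots> = (x \<bullet> (M *v x)) / (norm x)\<^sup>2"
      by (simp add: matrix_vector_mult_scaleR power2_eq_square divide_inverse)
    finally have "l * (norm x)\<^sup>2 \<le> x \<bullet> (M *v x)"
      using False by (simp add: field_simps)
    then show ?thesis
      by (simp add: power2_norm_eq_inner)
  qed simp
  let ?N = "M - l *\<^sub>R mat 1"
  have "?N *v v = 0"
  proof (rule quadratic_form_eq_0_imp_mult_eq_0[OF _ V])
    show "transpose ?N = ?N"
      using sym by (simp add: transpose_diff transpose_scalar)
    show "0 \<le> x \<bullet> (?N *v x)" if "x \<in> V" for x
      using lower[OF that] by (simp add: matrix_vector_mult_diff_rdistrib scaleR_matrix_vector_mult inner_diff_right)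
    show "v \<in> V" "?N *v v \<in> V"
      using v inv V by (simp_all add: matrix_vector_mult_diff_rdistrib scaleR_matrix_vector_mult
          subspace_diff subspace_scale)
    have "v \<bullet> v = 1"
      using v by (simp add: power2_norm_eq_inner[symmetric])
    then show "v \<bullet> (?N *v v) = 0"
      by (simp add: l_def matrix_vector_mult_diff_rdistrib scaleR_matrix_vector_mult inner_diff_right)
  qed
  then have "M *v v = l *\<^sub>R v"
    by (simp add: matrix_vector_mult_diff_rdistrib scaleR_matrix_vector_mult)
  then show ?thesis
    using v lower by auto
qed

lemma symmetric_min_eigenvector:
  fixes M :: "real^'n^'n"
  assumes "transpose M = M"
  obtains l v where "norm v = 1" "M *v v = l *\<^sub>R v" "\<And>x. l * (x \<bullet> x) \<le> x \<bullet> (M *v x)"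
proof -
  obtain x0 :: "real^'n" where "norm x0 = 1"
    using vector_choose_size[of 1] by auto
  then have "x0 \<noteq> 0"
    by auto
  then show ?thesis
    using symmetric_min_eigenvector_in_invariant_subspace[OF assms subspace_UNIV _ UNIV_I] that
    by auto
qed

lemma pos_def_lower_bound:
  assumes P: "pos_def (P::real^'n^'n)"
  obtains d where "0 < d" "\<And>x. d * (x \<bullet> x) \<le> x \<bullet> (P *v x)"
proof -
  have "transpose P = P"
    using P by (simp add: pos_def_def)
  then obtain l v where v: "norm v = 1" "P *v v = l *\<^sub>R v"
    and lower: "\<And>x. l * (x \<bullet> x) \<le> x \<bullet> (P *v x)"
    using symmetric_min_eigenvector by blast
  have "v \<noteq> 0"
    using v(1) by auto
  then have "0 < v \<bullet> (P *v v)"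
    using P by (simp add: pos_def_def)
  also have "v \<bullet> (P *v v) = l"
    using v by (simp add: power2_norm_eq_inner[symmetric])
  finally have "0 < l" .
  then show ?thesis
    using lower by (rule that)
qed

definition orthonormal_eigenvectors :: "real^'n^'n \<Rightarrow> (real^'n) set \<Rightarrow> bool" where
  "orthonormal_eigenvectors M E \<longleftrightarrow>
     finite E \<and> pairwise orthogonal E \<and> (\<forall>e\<in>E. norm e = 1 \<and> (\<exists>l. M *v e = l *\<^sub>R e))"

lemma orthonormal_eigenvectors_independent: "orthonormal_eigenvectors M E \<Longrightarrow> independent E"
  unfolding orthonormal_eigenvectors_def by (intro pairwise_orthogonal_independent) auto

lemma symmetric_orthonormal_eigenvectors:
  fixes M :: "real^'n^'n"
  assumes sym: "transpose M = M"
  shows "k \<le> CARD('n) \<Longrightarrow> \<exists>E. orthonormal_eigenvectors M E \<and> card E = k"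
proof (induction k)
  case 0
  show ?case
    by (intro exI[of _ "{}"]) (simp add: orthonormal_eigenvectors_def)
next
  case (Suc k)
  then obtain E where E: "orthonormal_eigenvectors M E" "card E = k"
    by auto
  let ?V = "{y. \<forall>e\<in>E. orthogonal e y}"
  have "dim E = k"
    using E dim_eq_card_independent[OF orthonormal_eigenvectors_independent[OF E(1)]] by simp
  then have "dim E < DIM(real^'n)"
    using Suc.prems by simp
  then obtain x where x: "x \<noteq> 0" "\<And>y. y \<in> span E \<Longrightarrow> orthogonal x y"
    using orthogonal_to_subspace_exists by blast
  have xV: "x \<in> ?V"
    using x(2) span_base by (auto simp: orthogonal_commute)
  have invariant: "M *v y \<in> ?V" if "y \<in> ?V" for y
  proof -
    have "orthogonal e (M *v y)" if "e \<in> E" for e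
    proof -
      obtain l where "M *v e = l *\<^sub>R e"
        using E(1) \<open>e \<in> E\<close> unfolding orthonormal_eigenvectors_def by blast
      then show ?thesis
        using \<open>y \<in> ?V\<close> \<open>e \<in> E\<close> symmetric_inner_commute[OF sym, of e y] by (simp add: orthogonal_def)
    qed
    then show ?thesis
      by simp
  qed
  obtain l v where v: "v \<in> ?V" "norm v = 1" "M *v v = l *\<^sub>R v"
    using symmetric_min_eigenvector_in_invariant_subspace[OF sym subspace_orthogonal_to_vectors
        invariant xV x(1)] by auto
  have "v \<notin> E"
  proof
    assume "v \<in> E"
    then have "v \<bullet> v = 0"
      using v(1) by (simp add: orthogonal_def)
    then show False
      using v(2) by simp
  qed
  have "\<forall>e\<in>E. orthogonal v e \<and> orthogonal e v"
    using v(1) by (simp add: orthogonal_commute)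
  then have "pairwise orthogonal (insert v E)"
    using E(1) by (simp add: pairwise_insert orthonormal_eigenvectors_def)
  then have "orthonormal_eigenvectors M (insert v E)"
    using E(1) v by (simp add: orthonormal_eigenvectors_def)
  moreover have "card (insert v E) = Suc k"
    using E \<open>v \<notin> E\<close> by (simp add: orthonormal_eigenvectors_def)
  ultimately show ?case
    by blast
qed

lemma symmetric_orthonormal_eigenbasis:
  fixes M :: "real^'n^'n"
  assumes "transpose M = M"
  obtains E where "orthonormal_eigenvectors M E" "span E = UNIV"
proof -
  obtain E where E: "orthonormal_eigenvectors M E" "card E = CARD('n)"
    using symmetric_orthonormal_eigenvectors[OF assms] by blast
  then have "UNIV \<subseteq> span E"
    using card_eq_dim[of E UNIV] orthonormal_eigenvectors_independent[OF E(1)] E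
    by (simp add: orthonormal_eigenvectors_def)
  then show ?thesis
    using that E(1) by blast
qed

lemma psd_square_eq_imp_mult_eq:
  fixes T :: "real^'n^'n"
  assumes T: "psd T" and "0 \<le> \<mu>" and eq: "(T ** T) *v v = \<mu>\<^sup>2 *\<^sub>R v"
  shows "T *v v = \<mu> *\<^sub>R v"
proof (cases "\<mu> = 0")
  case True
  have "(T *v v) \<bullet> (T *v v) = v \<bullet> ((T ** T) *v v)"
    using T symmetric_inner_commute[of T v "T *v v"] by (simp add: psd_def matrix_vector_mul_assoc)
  then show ?thesis
    using eq True by simp
next
  case False
  \<comment> \<open>\<open>u = T v - \<mu> v\<close> satisfies \<open>T u = -\<mu> u\<close>, impossible for \<open>u \<noteq> 0\<close> when \<open>T\<close> is psd and \<open>\<mu> > 0\<close>.\<close>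
  let ?u = "T *v v - \<mu> *\<^sub>R v"
  have "T *v ?u + \<mu> *\<^sub>R ?u = 0"
    using eq by (simp add: matrix_vector_mult_diff_distrib matrix_vector_mult_scaleR algebra_simps
        power2_eq_square matrix_vector_mul_assoc)
  then have "?u \<bullet> (T *v ?u) + \<mu> * (?u \<bullet> ?u) = 0"
    by (metis inner_add_right inner_scaleR_right inner_zero_right)
  moreover have "0 \<le> ?u \<bullet> (T *v ?u)"
    using T by (rule psd_nonneg)
  moreover have "0 \<le> \<mu> * (?u \<bullet> ?u)"
    using \<open>0 \<le> \<mu>\<close> by simp
  ultimately have "\<mu> * (?u \<bullet> ?u) = 0"
    by linarith
  then show ?thesis
    using False by simp
qed

lemma psd_eigenbasis:
  assumes Q: "psd (Q::real^'n^'n)"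
  obtains E lam where "orthonormal_eigenvectors Q E" "span E = UNIV"
    "\<And>e. e \<in> E \<Longrightarrow> Q *v e = lam e *\<^sub>R e" "\<And>e. 0 \<le> lam e"
proof -
  obtain E where E: "orthonormal_eigenvectors Q E" "span E = UNIV"
    using symmetric_orthonormal_eigenbasis[of Q] Q by (auto simp: psd_def)
  have "Q *v e = (e \<bullet> (Q *v e)) *\<^sub>R e" if e: "e \<in> E" for e
  proof -
    obtain l where "Q *v e = l *\<^sub>R e" "norm e = 1"
      using E(1) e by (auto simp: orthonormal_eigenvectors_def)
    then show ?thesis
      by (simp add: power2_norm_eq_inner[symmetric])
  qed
  then show ?thesis
    using Q by (intro that[OF E, of "\<lambda>e. e \<bullet> (Q *v e)"]) (simp_all add: psd_nonneg)
qed

lemma psd_square_root_exists: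
  assumes Q: "psd (Q::real^'n^'n)"
  shows "\<exists>S. psd S \<and> S ** S = Q"
proof -
  obtain E lam where E: "orthonormal_eigenvectors Q E" "span E = UNIV"
    and Qe: "\<And>e. e \<in> E \<Longrightarrow> Q *v e = lam e *\<^sub>R e" and lam: "\<And>e. 0 \<le> lam e"
    using psd_eigenbasis[OF Q] by blast
  define S where "S = (\<Sum>e\<in>E. sqrt (lam e) *\<^sub>R (\<chi> i j. e $ i * e $ j))"
  have Sx: "S *v x = (\<Sum>e\<in>E. (sqrt (lam e) * (e \<bullet> x)) *\<^sub>R e)" for x
    by (simp add: S_def matrix_sum_vector_mult scaleR_matrix_vector_mult matrix_vector_mult_def
        vec_eq_iff inner_vec_def sum_distrib_left mult_ac)
      (simp add: sum.swap[of _ UNIV E])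
  have Se: "S *v e = sqrt (lam e) *\<^sub>R e" if e: "e \<in> E" for e
  proof -
    have "S *v e = (\<Sum>e'\<in>E. if e' = e then sqrt (lam e) *\<^sub>R e else 0)"
      unfolding Sx
    proof (rule sum.cong[OF refl])
      fix e' assume "e' \<in> E"
      then have "e' \<bullet> e = (if e' = e then 1 else 0)"
        using E(1) e
        by (auto simp: orthonormal_eigenvectors_def pairwise_def orthogonal_def power2_norm_eq_inner[symmetric])
      then show "(sqrt (lam e') * (e' \<bullet> e)) *\<^sub>R e' = (if e' = e then sqrt (lam e) *\<^sub>R e else 0)"
        by simp
    qed
    then show ?thesis
      using E(1) e by (simp add: orthonormal_eigenvectors_def)
  qed
  have "psd S"
    unfolding psd_def
  proof (intro conjI allI)
    show "transpose S = S"
      by (simp add: S_def transpose_sum transpose_scalar transpose_def vec_eq_iff mult.commute)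
    have form: "x \<bullet> (S *v x) = (\<Sum>e\<in>E. sqrt (lam e) * (e \<bullet> x)\<^sup>2)" for x
      unfolding Sx by (simp add: inner_sum_right inner_commute power2_eq_square mult.assoc)
    show "0 \<le> x \<bullet> (S *v x)" for x
      unfolding form using lam by (simp add: sum_nonneg)
  qed
  moreover have "S ** S = Q"
  proof (rule matrix_eq_on_span[OF E(2)])
    fix e assume "e \<in> E"
    then show "(S ** S) *v e = Q *v e"
      using lam[of e] by (simp add: Se Qe matrix_vector_mult_scaleR flip: matrix_vector_mul_assoc)
  qed
  ultimately show ?thesis
    by blast
qed

lemma psd_square_root_unique:
  assumes Q: "psd (Q::real^'n^'n)" and S: "psd S" "S ** S = Q" and T: "psd T" "T ** T = Q"
  shows "S = T"
proof -
  obtain E lam where "orthonormal_eigenvectors Q E" and E: "span E = UNIV"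
    and Qe: "\<And>e. e \<in> E \<Longrightarrow> Q *v e = lam e *\<^sub>R e" and lam: "\<And>e. 0 \<le> lam e"
    using psd_eigenbasis[OF Q] by blast
  have root: "U *v e = sqrt (lam e) *\<^sub>R e" if U: "psd U" "U ** U = Q" and e: "e \<in> E" for U e
  proof -
    have "(U ** U) *v e = lam e *\<^sub>R e"
      using U(2) Qe[OF e] by simp
    also have "\<dots> = (sqrt (lam e))\<^sup>2 *\<^sub>R e"
      using lam[of e] by simp
    finally have "(U ** U) *v e = (sqrt (lam e))\<^sup>2 *\<^sub>R e" .
    then show ?thesis
      by (rule psd_square_eq_imp_mult_eq[OF U(1) real_sqrt_ge_zero[OF lam]])
  qed
  have "S *v e = T *v e" if "e \<in> E" for e
    using root[OF S that] root[OF T that] by simp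
  then show ?thesis
    by (rule matrix_eq_on_span[OF E])
qed

lemma msqrt_psd_square:
  assumes "psd Q"
  shows "psd (msqrt Q)" "msqrt Q ** msqrt Q = Q"
proof -
  have "\<exists>!S. psd S \<and> S ** S = Q"
    using psd_square_root_exists[OF assms] psd_square_root_unique[OF assms] by auto
  from theI'[OF this] show "psd (msqrt Q)" "msqrt Q ** msqrt Q = Q"
    unfolding msqrt_def by simp_all
qed

lemma msqrt_mult_eq_0:
  assumes Q: "psd Q" and x: "x \<bullet> (Q *v x) = 0"
  shows "msqrt Q *v x = 0"
proof -
  have "(msqrt Q *v x) \<bullet> (msqrt Q *v x) = x \<bullet> (Q *v x)"
    using msqrt_psd_square[OF Q] symmetric_inner_commute[of "msqrt Q" x "msqrt Q *v x"]
    by (simp add: psd_def matrix_vector_mul_assoc)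
  then show ?thesis
    using x by simp
qed

section \<open>Lyapunov equations of Schur stable matrices\<close>

definition lyap_op :: "real^'n^'n \<Rightarrow> real^'n^'n \<Rightarrow> real^'n^'n" where
  "lyap_op F X = X - transpose F ** X ** F"

definition gramian :: "real^'n^'n \<Rightarrow> real^'n^'n \<Rightarrow> nat \<Rightarrow> real^'n^'n" where
  "gramian F W N = (\<Sum>k<N. transpose (mpow F k) ** W ** mpow F k)"

lemma linear_lyap_op: "linear (lyap_op (F::real^'n^'n))"
proof (rule linearI)
  show "lyap_op F (X + Y) = lyap_op F X + lyap_op F Y" for X Y
    by (simp add: lyap_op_def matrix_add_ldistrib matrix_add_rdistrib)
  show "lyap_op F (c *\<^sub>R X) = c *\<^sub>R lyap_op F X" for c X
    by (simp add: lyap_op_def matrix_scalar_ac scalar_matrix_assoc scaleR_diff_right)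
qed

lemma lyap_op_transpose: "lyap_op F (transpose X) = transpose (lyap_op (F::real^'n^'n) X)"
  by (simp add: lyap_op_def transpose_diff matrix_transpose_mul matrix_mul_assoc)

lemma schur_stable_lyap_op_eq_0:
  fixes F D :: "real^'n^'n"
  assumes F: "schur_stable F" and D: "lyap_op F D = 0"
  shows "D = 0"
proof -
  have invariant: "transpose (mpow F k) ** D ** mpow F k = D" for k
  proof (induction k)
    case (Suc k)
    have "transpose (mpow F (Suc k)) ** D ** mpow F (Suc k)
        = transpose (mpow F k) ** (transpose F ** D ** F) ** mpow F k"
      by (simp add: matrix_transpose_mul matrix_mul_assoc)
    then show ?case
      using D Suc by (simp add: lyap_op_def)
  qed simp
  have "x \<bullet> (D *v y) = 0" for x y
  proof -
    have "(\<lambda>k. (mpow F k *v x) \<bullet> (D *v (mpow F k *v y))) \<longlonglongrightarrow> 0 \<bullet> (D *v 0)"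
      using F unfolding schur_stable_def
      by (intro tendsto_inner bounded_linear.tendsto[OF matrix_vector_mul_bounded_linear]) auto
    moreover have "(mpow F k *v x) \<bullet> (D *v (mpow F k *v y)) = x \<bullet> (D *v y)" for k
      using inner_matrix_sandwich[of x "mpow F k" D "mpow F k" y] invariant[of k] by simp
    ultimately show ?thesis
      by (simp add: LIMSEQ_const_iff)
  qed
  then have "D *v y = 0" for y
    by (metis inner_eq_zero_iff)
  then show ?thesis
    by (simp add: matrix_eq)
qed

lemma schur_stable_lyap_op_inj:
  assumes "schur_stable (F::real^'n^'n)"
  shows "inj (lyap_op F)"
proof (rule injI)
  fix X Y assume "lyap_op F X = lyap_op F Y"
  then have "lyap_op F (X - Y) = 0"
    by (simp add: linear_diff[OF linear_lyap_op])
  then have "X - Y = 0"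
    by (rule schur_stable_lyap_op_eq_0[OF assms])
  then show "X = Y"
    by simp
qed

lemma schur_stable_lyap_op_surj: "schur_stable F \<Longrightarrow> surj (lyap_op (F::real^'n^'n))"
  by (rule linear_injective_imp_surjective[OF linear_lyap_op schur_stable_lyap_op_inj]) simp_all

lemma inner_gramian:
  fixes F W :: "real^'n^'n"
  shows "x \<bullet> (gramian F W N *v x) = (\<Sum>k<N. (mpow F k *v x) \<bullet> (W *v (mpow F k *v x)))"
  by (simp add: gramian_def matrix_sum_vector_mult inner_sum_right inner_matrix_sandwich)

lemma gramian_pos_def:
  fixes F W :: "real^'n^'n"
  assumes W: "psd W" and obs: "\<And>x. \<forall>k<N. (mpow F k *v x) \<bullet> (W *v (mpow F k *v x)) = 0 \<Longrightarrow> x = 0"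
  shows "pos_def (gramian F W N)"
  unfolding pos_def_def
proof (intro conjI allI impI)
  show "transpose (gramian F W N) = gramian F W N"
    using W by (simp add: gramian_def psd_def transpose_sum matrix_transpose_mul matrix_mul_assoc)
  fix x :: "real^'n" assume "x \<noteq> 0"
  then obtain k where "k < N" "(mpow F k *v x) \<bullet> (W *v (mpow F k *v x)) \<noteq> 0"
    using obs by blast
  then show "0 < x \<bullet> (gramian F W N *v x)"
    unfolding inner_gramian using W
    by (intro sum_pos2[of _ k]) (auto simp: psd_nonneg order_less_le)
qed

lemma lyap_op_inner_expansion:
  fixes F X W :: "real^'n^'n"
  assumes "lyap_op F X = W"
  shows "x \<bullet> (X *v x) = x \<bullet> (gramian F W N *v x) + (mpow F N *v x) \<bullet> (X *v (mpow F N *v x))"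
proof (induction N)
  case (Suc N)
  let ?y = "mpow F N *v x"
  have X: "X = W + transpose F ** X ** F"
    using assms by (simp add: lyap_op_def algebra_simps)
  have "?y \<bullet> (X *v ?y) = ?y \<bullet> (W *v ?y) + ?y \<bullet> ((transpose F ** X ** F) *v ?y)"
    by (subst X) (simp add: matrix_vector_mult_add_rdistrib inner_add_right)
  then have "?y \<bullet> (X *v ?y) = ?y \<bullet> (W *v ?y) + (F *v ?y) \<bullet> (X *v (F *v ?y))"
    by (simp only: inner_matrix_sandwich)
  then show ?case
    using Suc by (simp add: inner_gramian matrix_vector_mul_assoc)
qed (simp add: gramian_def)

lemma lyap_op_solution_pos_def:
  fixes F X W :: "real^'n^'n"
  assumes F: "schur_stable F" and W: "psd W" and G: "pos_def (gramian F W N)"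
    and X: "lyap_op F X = W"
  shows "pos_def X"
proof -
  have "lyap_op F (transpose X) = lyap_op F X"
    using X W by (simp add: lyap_op_transpose psd_def)
  then have sym: "transpose X = X"
    using schur_stable_lyap_op_inj[OF F] by (simp add: inj_eq)
  have "x \<bullet> (gramian F W N *v x) \<le> x \<bullet> (X *v x)" for x
  proof -
    let ?t = "\<lambda>m. (mpow F m *v x) \<bullet> (X *v (mpow F m *v x))"
    have "?t \<longlonglongrightarrow> 0 \<bullet> (X *v 0)"
      using F unfolding schur_stable_def
      by (intro tendsto_inner bounded_linear.tendsto[OF matrix_vector_mul_bounded_linear]) auto
    then have "(\<lambda>m. x \<bullet> (X *v x) - ?t m) \<longlonglongrightarrow> x \<bullet> (X *v x) - 0 \<bullet> (X *v 0)"
      by (intro tendsto_diff tendsto_const)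
    then have lim: "(\<lambda>m. x \<bullet> (X *v x) - ?t m) \<longlonglongrightarrow> x \<bullet> (X *v x)"
      by simp
    have "x \<bullet> (gramian F W N *v x) \<le> x \<bullet> (X *v x) - ?t m" if "N \<le> m" for m
    proof -
      have "x \<bullet> (gramian F W N *v x) \<le> x \<bullet> (gramian F W m *v x)"
        unfolding inner_gramian using that W by (intro sum_mono2) (auto simp: psd_nonneg)
      then show ?thesis
        using lyap_op_inner_expansion[OF X, of x m] by simp
    qed
    then have "\<exists>M. \<forall>m\<ge>M. x \<bullet> (gramian F W N *v x) \<le> x \<bullet> (X *v x) - ?t m"
      by blast
    then show ?thesis
      by (rule LIMSEQ_le_const[OF lim])
  qed
  moreover have "0 < x \<bullet> (gramian F W N *v x)" if "x \<noteq> 0" for x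
    using G that by (simp add: pos_def_def)
  ultimately show ?thesis
    using sym unfolding pos_def_def by (meson less_le_trans)
qed

lemma schur_stable_if_lyapunov_decrease:
  fixes F P W :: "real^'n^'n"
  assumes P: "psd P" and W: "psd W"
    and decrease: "\<And>x. (F *v x) \<bullet> (P *v (F *v x)) \<le> x \<bullet> (P *v x) - x \<bullet> (W *v x)"
    and G: "pos_def (gramian F W N)"
  shows "schur_stable F"
  unfolding schur_stable_def
proof
  fix x :: "real^'n"
  let ?V = "\<lambda>y. y \<bullet> (P *v y)"
  define s where "s k = ?V (mpow F k *v x)" for k
  have iterate: "?V (mpow F m *v y) + y \<bullet> (gramian F W m *v y) \<le> ?V y" for m y
  proof (induction m)
    case (Suc m)
    have "?V (mpow F (Suc m) *v y) \<le> ?V (mpow F m *v y) - (mpow F m *v y) \<bullet> (W *v (mpow F m *v y))"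
      using decrease[of "mpow F m *v y"] by (simp add: matrix_vector_mul_assoc)
    then show ?case
      using Suc by (simp add: inner_gramian)
  qed (simp add: gramian_def)
  have "s (Suc k) \<le> s k" for k
    using decrease[of "mpow F k *v x"] psd_nonneg[OF W, of "mpow F k *v x"]
    by (simp add: s_def matrix_vector_mul_assoc)
  then have "decseq s"
    by (simp add: decseq_Suc_iff)
  moreover have "\<forall>k. 0 \<le> s k"
    using P by (simp add: s_def psd_nonneg)
  ultimately obtain L where "s \<longlonglongrightarrow> L"
    by (rule decseq_convergent)
  then have "(\<lambda>k. s k - s (k + N)) \<longlonglongrightarrow> L - L"
    by (intro tendsto_diff LIMSEQ_ignore_initial_segment)
  then have lim: "(\<lambda>k. s k - s (k + N)) \<longlonglongrightarrow> 0"
    by simp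
  \<comment> \<open>The decrease of the Lyapunov function over \<open>N\<close> steps dominates \<open>|F\<^sup>k x|\<^sup>2\<close>.\<close>
  obtain e where e: "0 < e" "\<And>y. e * (y \<bullet> y) \<le> y \<bullet> (gramian F W N *v y)"
    using pos_def_lower_bound[OF G] by blast
  have bound: "e * (norm (mpow F k *v x))\<^sup>2 \<le> s k - s (k + N)" for k
  proof -
    have "mpow F (k + N) = mpow F N ** mpow F k"
      by (simp only: add.commute[of k N] mpow_add)
    then have "s (k + N) = ?V (mpow F N *v (mpow F k *v x))"
      by (simp add: s_def matrix_vector_mul_assoc)
    then show ?thesis
      using iterate[of N "mpow F k *v x"] e(2)[of "mpow F k *v x"]
      by (simp add: s_def power2_norm_eq_inner)
  qed
  have "(\<lambda>k. e * (norm (mpow F k *v x))\<^sup>2) \<longlonglongrightarrow> 0"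
    by (rule tendsto_sandwich[OF always_eventually always_eventually tendsto_const lim])
      (simp_all add: bound less_imp_le[OF e(1)])
  then have "(\<lambda>k. (norm (mpow F k *v x))\<^sup>2) \<longlonglongrightarrow> 0"
    using tendsto_mult_left_iff[of e "\<lambda>k. (norm (mpow F k *v x))\<^sup>2" 0] e(1) by simp
  then have "(\<lambda>k. sqrt ((norm (mpow F k *v x))\<^sup>2)) \<longlonglongrightarrow> sqrt 0"
    by (rule tendsto_real_sqrt)
  then have "(\<lambda>k. norm (mpow F k *v x)) \<longlonglongrightarrow> 0"
    by simp
  then show "(\<lambda>k. mpow F k *v x) \<longlonglongrightarrow> 0"
    by (rule tendsto_norm_zero_cancel)
qed

section \<open>Closed loops and the scaled Lyapunov equation\<close>

lemma inner_closed_loop_cost: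
  "x \<bullet> ((Q + transpose K ** R ** K) *v x) = x \<bullet> (Q *v x) + (K *v x) \<bullet> (R *v (K *v (x::real^'n)))"
  by (simp add: matrix_vector_mult_add_rdistrib inner_add_right inner_matrix_sandwich)

lemma psd_closed_loop_cost:
  fixes K :: "real^'n^'m"
  assumes Q: "psd Q" and R: "pos_def R"
  shows "psd (Q + transpose K ** R ** K)"
  unfolding psd_def
proof (intro conjI allI)
  show "transpose (Q + transpose K ** R ** K) = Q + transpose K ** R ** K"
    using Q R by (simp add: psd_def pos_def_def transpose_add matrix_transpose_mul matrix_mul_assoc)
  show "0 \<le> x \<bullet> ((Q + transpose K ** R ** K) *v x)" for x
    using psd_nonneg[OF Q] psd_nonneg[OF pos_def_imp_psd[OF R]] by (simp add: inner_closed_loop_cost)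
qed

lemma observable_closed_loop_gramian:
  fixes A :: "real^'n^'n" and B :: "real^'m^'n" and K :: "real^'n^'m" and R :: "real^'m^'m"
  assumes obsv: "observable A (msqrt Q)" and Q: "psd Q" and R: "pos_def R" and "s \<noteq> 0"
  shows "pos_def (gramian (s *\<^sub>R (A - B ** K)) (Q + transpose K ** R ** K) CARD('n))"
proof (rule gramian_pos_def[OF psd_closed_loop_cost[OF Q R]])
  let ?M = "s *\<^sub>R (A - B ** K)"
  fix x assume zero: "\<forall>k<CARD('n).
    (mpow ?M k *v x) \<bullet> ((Q + transpose K ** R ** K) *v (mpow ?M k *v x)) = 0"
  have unobserved: "y \<bullet> (Q *v y) = 0 \<and> K *v y = 0"
    if "y \<bullet> ((Q + transpose K ** R ** K) *v y) = 0" for y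
  proof -
    have "y \<bullet> (Q *v y) = 0 \<and> (K *v y) \<bullet> (R *v (K *v y)) = 0"
      using that psd_nonneg[OF Q, of y] psd_nonneg[OF pos_def_imp_psd[OF R], of "K *v y"]
      by (simp add: inner_closed_loop_cost)
    then show ?thesis
      using R by (auto simp: pos_def_def)
  qed
  \<comment> \<open>Along an unobserved trajectory the feedback vanishes, so the closed loop evolves like \<open>s A\<close>.\<close>
  have open_loop: "mpow ?M k *v x = s ^ k *\<^sub>R (mpow A k *v x)" if "k < CARD('n)" for k
    using that
  proof (induction k)
    case (Suc k)
    then have "k < CARD('n)"
      by simp
    then have "K *v (mpow ?M k *v x) = 0"
      using zero unobserved[of "mpow ?M k *v x"] by blast
    then have "mpow ?M (Suc k) *v x = s *\<^sub>R (A *v (mpow ?M k *v x))"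
      by (simp add: scaleR_matrix_vector_mult matrix_vector_mult_diff_rdistrib
          flip: matrix_vector_mul_assoc)
    then show ?case
      using Suc by (simp add: matrix_vector_mult_scaleR matrix_vector_mul_assoc)
  qed simp
  have "(msqrt Q ** mpow A k) *v x = 0" if "k < CARD('n)" for k
  proof -
    have "msqrt Q *v (mpow ?M k *v x) = 0"
      using zero unobserved that by (simp add: msqrt_mult_eq_0[OF Q])
    then show ?thesis
      using open_loop[OF that] \<open>s \<noteq> 0\<close>
      by (simp add: matrix_vector_mult_scaleR flip: matrix_vector_mul_assoc)
  qed
  then show "x = 0"
    using obsv unfolding observable_def by blast
qed

lemma scaled_lyap_eq_iff:
  fixes F X W :: "real^'n^'n"
  assumes "0 < g"
  shows "g *\<^sub>R (transpose F ** X ** F) - X + W = 0 \<longleftrightarrow> lyap_op (sqrt g *\<^sub>R F) X = W"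
proof -
  have "transpose (sqrt g *\<^sub>R F) ** X ** (sqrt g *\<^sub>R F) = (sqrt g * sqrt g) *\<^sub>R (transpose F ** X ** F)"
    by (simp add: transpose_scalar matrix_scalar_ac scalar_matrix_assoc)
  then show ?thesis
    using assms by (auto simp: lyap_op_def algebra_simps)
qed

lemma scaled_lyap_eq_ex1:
  fixes F W :: "real^'n^'n"
  assumes g: "0 < g" and F: "schur_stable (sqrt g *\<^sub>R F)"
  shows "\<exists>!X. g *\<^sub>R (transpose F ** X ** F) - X + W = 0"
  unfolding scaled_lyap_eq_iff[OF g]
  using schur_stable_lyap_op_surj[OF F] schur_stable_lyap_op_inj[OF F]
  by (metis injD surjD)

lemma closed_loop_lyap_eq_pos_def:
  fixes A :: "real^'n^'n" and B :: "real^'m^'n" and K :: "real^'n^'m" and R :: "real^'m^'m"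
  assumes obsv: "observable A (msqrt Q)" and Q: "psd Q" and R: "pos_def R"
    and g: "0 < g" and F: "schur_stable (sqrt g *\<^sub>R (A - B ** K))"
    and X: "g *\<^sub>R (transpose (A - B ** K) ** X ** (A - B ** K)) - X + Q + transpose K ** R ** K = 0"
  shows "pos_def X"
proof (rule lyap_op_solution_pos_def[OF F psd_closed_loop_cost[OF Q R]])
  show "pos_def (gramian (sqrt g *\<^sub>R (A - B ** K)) (Q + transpose K ** R ** K) CARD('n))"
    using g by (intro observable_closed_loop_gramian[OF obsv Q R]) simp
  show "lyap_op (sqrt g *\<^sub>R (A - B ** K)) X = Q + transpose K ** R ** K"
    using X[unfolded add.assoc] scaled_lyap_eq_iff[OF g] by blast
qed

lemma closed_loop_lyap_eq_ex1_pos_def: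
  fixes A :: "real^'n^'n" and B :: "real^'m^'n" and K :: "real^'n^'m" and R :: "real^'m^'m"
  assumes obsv: "observable A (msqrt Q)" and Q: "psd Q" and R: "pos_def R"
    and g: "0 < g" and F: "schur_stable (sqrt g *\<^sub>R (A - B ** K))"
  shows "\<exists>!X. pos_def X \<and>
    g *\<^sub>R (transpose (A - B ** K) ** X ** (A - B ** K)) - X + Q + transpose K ** R ** K = 0"
  unfolding add.assoc
  using scaled_lyap_eq_ex1[OF g F, of "Q + transpose K ** R ** K"]
    closed_loop_lyap_eq_pos_def[OF obsv Q R g F, unfolded add.assoc]
  by blast

section \<open>One step of the scaled policy iteration\<close>

lemma lqr_gain_normal_equation:
  fixes P :: "real^'n^'n" and B :: "real^'m^'n" and R :: "real^'m^'m"
  assumes P: "psd P" and R: "pos_def R" and g: "0 < g"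
  shows "(transpose B ** P ** B + (1 / g) *\<^sub>R R) **
           (matrix_inv (transpose B ** P ** B + (1 / g) *\<^sub>R R) ** transpose B ** P ** A)
         = transpose B ** P ** A"
proof -
  let ?H = "transpose B ** P ** B + (1 / g) *\<^sub>R R"
  have "u = 0" if "?H *v u = 0" for u
  proof (rule ccontr)
    assume "u \<noteq> 0"
    then have "0 < (1 / g) * (u \<bullet> (R *v u))"
      using R g by (simp add: pos_def_def)
    moreover have "u \<bullet> (?H *v u) = (B *v u) \<bullet> (P *v (B *v u)) + (1 / g) * (u \<bullet> (R *v u))"
      by (simp add: matrix_vector_mult_add_rdistrib scaleR_matrix_vector_mult inner_add_right
          inner_matrix_sandwich)
    ultimately have "0 < u \<bullet> (?H *v u)"
      using psd_nonneg[OF P, of "B *v u"] by linarith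
    then show False
      using that by simp
  qed
  then have "invertible ?H"
    using invertible_left_inverse matrix_left_invertible_ker by blast
  then show ?thesis
    by (simp add: matrix_mul_assoc matrix_inv_right)
qed

text \<open>The input \<open>K x\<close> minimises the one-step cost \<open>g |A x - B u|\<^sup>2\<^sub>P + |u|\<^sup>2\<^sub>R\<close>;
  the last two terms are the excess of an arbitrary input \<open>u\<close>.\<close>

lemma lqr_completing_square:
  fixes A P :: "real^'n^'n" and B :: "real^'m^'n" and K :: "real^'n^'m" and R :: "real^'m^'m"
    and x :: "real^'n" and u :: "real^'m"
  assumes P: "transpose P = P" and R: "transpose R = R" and g: "0 < g"
    and K: "(transpose B ** P ** B + (1 / g) *\<^sub>R R) ** K = transpose B ** P ** A"
  defines "d \<equiv> u - K *v x" and "f \<equiv> (A - B ** K) *v x"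
  shows "g * ((A *v x - B *v u) \<bullet> (P *v (A *v x - B *v u))) + u \<bullet> (R *v u) =
           g * (f \<bullet> (P *v f)) + (K *v x) \<bullet> (R *v (K *v x))
           + g * ((B *v d) \<bullet> (P *v (B *v d))) + d \<bullet> (R *v d)"
proof -
  let ?v = "K *v x"
  have f: "A *v x - B *v u = f - B *v d" and u: "u = ?v + d"
    by (simp_all add: f_def d_def matrix_vector_mult_diff_rdistrib matrix_vector_mult_diff_distrib
        matrix_vector_mul_assoc)
  have cross: "d \<bullet> (R *v ?v) = g * ((B *v d) \<bullet> (P *v f))"
  proof -
    have "d \<bullet> ((transpose B ** P ** B + (1 / g) *\<^sub>R R) *v ?v) = d \<bullet> ((transpose B ** P ** A) *v x)"
      using K by (simp add: matrix_vector_mul_assoc)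
    then have "(B *v d) \<bullet> (P *v (B *v ?v)) + (1 / g) * (d \<bullet> (R *v ?v)) = (B *v d) \<bullet> (P *v (A *v x))"
      by (simp add: matrix_vector_mult_add_rdistrib scaleR_matrix_vector_mult inner_add_right
          inner_matrix_sandwich)
    then have "(1 / g) * (d \<bullet> (R *v ?v)) = (B *v d) \<bullet> (P *v f)"
      by (simp add: f_def matrix_vector_mult_diff_rdistrib matrix_vector_mult_diff_distrib
          inner_diff_right matrix_vector_mul_assoc)
    then show ?thesis
      using g by (simp add: field_simps)
  qed
  have "g * ((A *v x - B *v u) \<bullet> (P *v (A *v x - B *v u))) + u \<bullet> (R *v u)
      = g * ((f - B *v d) \<bullet> (P *v (f - B *v d))) + (?v + d) \<bullet> (R *v (?v + d))"
    by (simp only: f u[symmetric])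
  also have "(f - B *v d) \<bullet> (P *v (f - B *v d)) =
      f \<bullet> (P *v f) - 2 * ((B *v d) \<bullet> (P *v f)) + (B *v d) \<bullet> (P *v (B *v d))"
    using symmetric_inner_commute[OF P, of f "B *v d"]
    by (simp add: matrix_vector_mult_diff_distrib inner_diff_left inner_diff_right inner_commute)
  also have "(?v + d) \<bullet> (R *v (?v + d)) = ?v \<bullet> (R *v ?v) + 2 * (d \<bullet> (R *v ?v)) + d \<bullet> (R *v d)"
    using symmetric_inner_commute[OF R, of ?v d]
    by (simp add: matrix_vector_right_distrib inner_add_left inner_add_right inner_commute)
  finally show ?thesis
    by (simp add: cross algebra_simps)
qed

lemma lqr_gain_decrease:
  fixes A P Q :: "real^'n^'n" and B :: "real^'m^'n" and K K' :: "real^'n^'m" and R :: "real^'m^'m"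
  assumes Q: "psd Q" and R: "pos_def R" and P: "psd P" and g: "0 < g"
    and lyap: "g *\<^sub>R (transpose (A - B ** K) ** P ** (A - B ** K)) - P + Q + transpose K ** R ** K = 0"
    and K': "K' = matrix_inv (transpose B ** P ** B + (1 / g) *\<^sub>R R) ** transpose B ** P ** A"
  shows "g * (((A - B ** K') *v x) \<bullet> (P *v ((A - B ** K') *v x)))
           \<le> x \<bullet> ((P - Q - transpose K' ** R ** K') *v x)"
proof -
  let ?d = "K *v x - K' *v x"
  have sym: "transpose P = P" "transpose R = R"
    using P R by (simp_all add: psd_def pos_def_def)
  have "(transpose B ** P ** B + (1 / g) *\<^sub>R R) ** K' = transpose B ** P ** A"
    using lqr_gain_normal_equation[OF P R g] K' by simp
  note square = lqr_completing_square[OF sym g this, where x = x and u = "K *v x"]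
  have "x \<bullet> ((g *\<^sub>R (transpose (A - B ** K) ** P ** (A - B ** K)) - P + Q + transpose K ** R ** K) *v x) = 0"
    using lyap by simp
  then have "g * ((A *v x - B *v (K *v x)) \<bullet> (P *v (A *v x - B *v (K *v x)))) + (K *v x) \<bullet> (R *v (K *v x))
      = x \<bullet> ((P - Q - transpose K' ** R ** K') *v x) + (K' *v x) \<bullet> (R *v (K' *v x))"
    by (simp add: matrix_vector_mult_add_rdistrib matrix_vector_mult_diff_rdistrib
        matrix_vector_mult_diff_distrib scaleR_matrix_vector_mult inner_add_right inner_diff_right
        inner_matrix_sandwich matrix_vector_mul_assoc)
  moreover have "0 \<le> g * ((B *v ?d) \<bullet> (P *v (B *v ?d)))" "0 \<le> ?d \<bullet> (R *v ?d)"
    using g psd_nonneg[OF P] psd_nonneg[OF pos_def_imp_psd[OF R]] by simp_all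
  ultimately show ?thesis
    using square by linarith
qed

lemma psd_invertible_imp_pos_def:
  assumes M: "psd M" and "invertible M"
  shows "pos_def (M::real^'n^'n)"
  unfolding pos_def_def
proof (intro conjI allI impI)
  show sym: "transpose M = M"
    using M by (simp add: psd_def)
  fix x :: "real^'n" assume "x \<noteq> 0"
  then have "M *v x \<noteq> 0"
    using \<open>invertible M\<close> by (metis inj_matrix_vector_mult injD matrix_vector_mult_0_right)
  then have "x \<bullet> (M *v x) \<noteq> 0"
    using quadratic_form_eq_0_imp_mult_eq_0[OF sym subspace_UNIV] psd_nonneg[OF M] by blast
  then show "0 < x \<bullet> (M *v x)"
    using psd_nonneg[OF M, of x] by linarith
qed

lemma generalized_min_eigenvector:
  fixes P N :: "real^'n^'n"
  assumes P: "transpose P = P" and N: "pos_def N"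
  shows "\<exists>t v. v \<noteq> 0 \<and> P *v v = t *\<^sub>R (N *v v) \<and> (\<forall>x. t * (x \<bullet> (N *v x)) \<le> x \<bullet> (P *v x))"
proof -
  let ?S = "sphere (0::real^'n) 1"
  let ?ratio = "\<lambda>x. (x \<bullet> (P *v x)) / (x \<bullet> (N *v x))"
  have N_pos: "0 < x \<bullet> (N *v x)" if "x \<noteq> 0" for x
    using N that by (simp add: pos_def_def)
  obtain x0 :: "real^'n" where "norm x0 = 1"
    using vector_choose_size[of 1] by auto
  then have "?S \<noteq> {}"
    by auto
  moreover have "x \<bullet> (N *v x) \<noteq> 0" if "x \<in> ?S" for x
  proof -
    have "x \<noteq> 0"
      using that by auto
    then show ?thesis
      using N_pos[of x] by simp
  qed
  then have "continuous_on ?S ?ratio"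
    by (intro continuous_intros linear_continuous_on) auto
  ultimately obtain v where v: "v \<in> ?S" and vmin: "\<And>y. y \<in> ?S \<Longrightarrow> ?ratio v \<le> ?ratio y"
    using continuous_attains_inf[OF compact_sphere] by blast
  define t where "t = ?ratio v"
  have v0: "v \<noteq> 0"
    using v by auto
  have lower: "t * (x \<bullet> (N *v x)) \<le> x \<bullet> (P *v x)" for x
  proof (cases "x = 0")
    case False
    have "t \<le> ?ratio (x /\<^sub>R norm x)"
      unfolding t_def by (rule vmin) (use False in simp)
    also have "?ratio (x /\<^sub>R norm x) = ?ratio x"
      using False by (simp add: matrix_vector_mult_scaleR)
    finally show ?thesis
      using N_pos[OF False] by (simp add: field_simps)
  qed simp
  let ?D = "P - t *\<^sub>R N"
  have "?D *v v = 0"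
  proof (rule quadratic_form_eq_0_imp_mult_eq_0[OF _ subspace_UNIV])
    show "transpose ?D = ?D"
      using P N by (simp add: pos_def_def transpose_diff transpose_scalar)
    show "0 \<le> x \<bullet> (?D *v x)" for x
      using lower[of x] by (simp add: matrix_vector_mult_diff_rdistrib scaleR_matrix_vector_mult inner_diff_right)
    show "v \<bullet> (?D *v v) = 0"
      using N_pos[OF v0] by (simp add: t_def matrix_vector_mult_diff_rdistrib scaleR_matrix_vector_mult inner_diff_right)
  qed simp_all
  then have "P *v v = t *\<^sub>R (N *v v)"
    by (simp add: matrix_vector_mult_diff_rdistrib scaleR_matrix_vector_mult)
  then show ?thesis
    using v0 lower by blast
qed

lemma sigma_min_le_eigenvalue:
  assumes Yz: "Y *v z = t *\<^sub>R z" and "z \<noteq> 0" and "0 \<le> t"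
  shows "sigma_min (Y::real^'n^'n) \<le> t"
proof -
  let ?E = "{l. \<exists>x. x \<noteq> 0 \<and> (transpose Y ** Y) *v x = l *\<^sub>R x}"
  have "transpose (transpose Y ** Y) = transpose Y ** Y"
    by (simp add: matrix_transpose_mul)
  then obtain l u where u: "norm u = 1" "(transpose Y ** Y) *v u = l *\<^sub>R u"
    and lower: "\<And>x. l * (x \<bullet> x) \<le> x \<bullet> ((transpose Y ** Y) *v x)"
    using symmetric_min_eigenvector by blast
  have "z \<bullet> ((transpose Y ** Y) *v z) = (Y *v z) \<bullet> (Y *v z)"
    by (simp only: matrix_vector_mul_assoc[symmetric] inner_transpose_mult)
  then have "l * (z \<bullet> z) \<le> (Y *v z) \<bullet> (Y *v z)"
    using lower[of z] by simp
  also have "\<dots> = t\<^sup>2 * (z \<bullet> z)"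
    by (simp add: Yz power2_eq_square)
  finally have "l \<le> t\<^sup>2"
    using \<open>z \<noteq> 0\<close> by simp
  moreover have "l \<in> ?E"
    using u by (auto intro!: exI[of _ u])
  then have "Min ?E \<le> l"
    using finite_real_eigenvalues by (rule Min_le[rotated])
  ultimately show ?thesis
    using \<open>0 \<le> t\<close> by (simp add: sigma_min_def real_le_lsqrt)
qed

lemma quadratic_form_bound_below_sigma_min:
  fixes P N :: "real^'n^'n"
  assumes P: "psd P" and N: "psd N" "invertible N"
    and c: "0 \<le> c" "c < sqrt (sigma_min (P ** matrix_inv N))"
  obtains e where "0 < e" "\<And>x. c\<^sup>2 * (x \<bullet> (N *v x)) + e * (x \<bullet> x) \<le> x \<bullet> (P *v x)"
proof -
  have N_pd: "pos_def N"
    using psd_invertible_imp_pos_def[OF N] .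
  obtain t v where v: "v \<noteq> 0" "P *v v = t *\<^sub>R (N *v v)"
    and lower: "\<And>x. t * (x \<bullet> (N *v x)) \<le> x \<bullet> (P *v x)"
    using generalized_min_eigenvector[OF _ N_pd] P unfolding psd_def by blast
  have "0 < v \<bullet> (N *v v)"
    using N_pd v(1) by (simp add: pos_def_def)
  moreover have "v \<bullet> (P *v v) = t * (v \<bullet> (N *v v))"
    using v(2) by simp
  ultimately have "0 \<le> t"
    using psd_nonneg[OF P, of v] by (simp add: zero_le_mult_iff)
  \<comment> \<open>\<open>N v\<close> is an eigenvector of \<open>P N\<^sup>-\<^sup>1\<close> for \<open>t\<close>, so the minimal singular value is at most \<open>t\<close>.\<close>
  have "(P ** matrix_inv N) *v (N *v v) = P *v ((matrix_inv N ** N) *v v)"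
    by (simp add: matrix_vector_mul_assoc matrix_mul_assoc)
  then have "(P ** matrix_inv N) *v (N *v v) = t *\<^sub>R (N *v v)"
    using v(2) matrix_inv_left[OF N(2)] by simp
  moreover have "N *v v \<noteq> 0"
    using v(1) N(2) by (metis inj_matrix_vector_mult injD matrix_vector_mult_0_right)
  ultimately have "sigma_min (P ** matrix_inv N) \<le> t"
    using \<open>0 \<le> t\<close> by (rule sigma_min_le_eigenvalue)
  then have "c < sqrt t"
    using c(2) by (meson order_less_le_trans real_sqrt_le_mono)
  then have ct: "c\<^sup>2 < t"
    using c(1) \<open>0 \<le> t\<close> by (metis power_strict_mono real_sqrt_pow2 zero_less_numeral)
  obtain d where d: "0 < d" "\<And>x. d * (x \<bullet> x) \<le> x \<bullet> (N *v x)"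
    using pos_def_lower_bound[OF N_pd] by blast
  show ?thesis
  proof (rule that[of "(t - c\<^sup>2) * d"])
    show "0 < (t - c\<^sup>2) * d"
      using ct d(1) by simp
    show "c\<^sup>2 * (x \<bullet> (N *v x)) + (t - c\<^sup>2) * d * (x \<bullet> x) \<le> x \<bullet> (P *v x)" for x
      using lower[of x] mult_left_mono[OF d(2)[of x], of "t - c\<^sup>2"] ct
      by (simp add: algebra_simps)
  qed
qed

lemma schur_stable_below_sigma_min:
  fixes F P N :: "real^'n^'n"
  assumes P: "psd P" and N: "transpose N = N" "invertible N" and g: "0 < g"
    and decrease: "\<And>x. g * ((F *v x) \<bullet> (P *v (F *v x))) \<le> x \<bullet> (N *v x)"
    and c: "0 \<le> c" "c < sqrt (sigma_min (P ** matrix_inv N))"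
  shows "schur_stable (sqrt (g * c\<^sup>2) *\<^sub>R F)"
proof -
  let ?V = "\<lambda>y. y \<bullet> (P *v y)"
  have "psd N"
    unfolding psd_def
  proof
    show "\<forall>x. 0 \<le> x \<bullet> (N *v x)"
      using decrease g psd_nonneg[OF P] by (meson mult_nonneg_nonneg order.trans less_imp_le)
  qed (rule N(1))
  then obtain e where e: "0 < e" "\<And>x. c\<^sup>2 * (x \<bullet> (N *v x)) + e * (x \<bullet> x) \<le> ?V x"
    using quadratic_form_bound_below_sigma_min[OF P _ N(2) c] by blast
  let ?W = "e *\<^sub>R mat 1 :: real^'n^'n"
  have W: "x \<bullet> (?W *v x) = e * (x \<bullet> x)" for x
    by (simp add: scaleR_matrix_vector_mult)
  show ?thesis
  proof (rule schur_stable_if_lyapunov_decrease[OF P, of ?W _ 1])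
    show "psd ?W" "pos_def (gramian (sqrt (g * c\<^sup>2) *\<^sub>R F) ?W 1)"
      using W e(1) by (simp_all add: psd_def pos_def_def gramian_def transpose_scalar)
    have "?V ((sqrt (g * c\<^sup>2) *\<^sub>R F) *v x) = c\<^sup>2 * (g * ?V (F *v x))" for x
      using g by (simp add: scaleR_matrix_vector_mult matrix_vector_mult_scaleR)
    then show "?V ((sqrt (g * c\<^sup>2) *\<^sub>R F) *v x) \<le> ?V x - x \<bullet> (?W *v x)" for x
      unfolding W using mult_left_mono[OF decrease[of x], of "c\<^sup>2"] e(2)[of x] by simp
  qed
qed

lemma closed_loop_schur_stable_if_cost_decrease:
  fixes A P Q :: "real^'n^'n" and B :: "real^'m^'n" and K :: "real^'n^'m" and R :: "real^'m^'m"
  assumes obsv: "observable A (msqrt Q)" and Q: "psd Q" and R: "pos_def R" and P: "psd P"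
    and g: "0 < g"
    and decrease: "\<And>x. g * (((A - B ** K) *v x) \<bullet> (P *v ((A - B ** K) *v x)))
                      \<le> x \<bullet> ((P - Q - transpose K ** R ** K) *v x)"
  shows "schur_stable (sqrt g *\<^sub>R (A - B ** K))"
proof (rule schur_stable_if_lyapunov_decrease[OF P psd_closed_loop_cost[OF Q R]])
  show "((sqrt g *\<^sub>R (A - B ** K)) *v x) \<bullet> (P *v ((sqrt g *\<^sub>R (A - B ** K)) *v x))
      \<le> x \<bullet> (P *v x) - x \<bullet> ((Q + transpose K ** R ** K) *v x)" for x
  proof -
    have sqrt_g: "sqrt g * (sqrt g * y) = g * y" for y
      using g by (simp flip: mult.assoc)
    show ?thesis
      using decrease[of x]
      by (simp add: sqrt_g scaleR_matrix_vector_mult matrix_vector_mult_scaleR matrix_vector_mult_diff_rdistrib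
          matrix_vector_mult_add_rdistrib inner_diff_right inner_add_right)
  qed
  show "pos_def (gramian (sqrt g *\<^sub>R (A - B ** K)) (Q + transpose K ** R ** K) CARD('n))"
    using g by (intro observable_closed_loop_gramian[OF obsv Q R]) simp
qed

lemma lqr_step_schur_stable:
  fixes A P Q :: "real^'n^'n" and B :: "real^'m^'n" and K K' :: "real^'n^'m" and R :: "real^'m^'m"
  assumes Q: "psd Q" and R: "pos_def R" and obsv: "observable A (msqrt Q)" and P: "psd P"
    and g: "0 < g"
    and lyap: "g *\<^sub>R (transpose (A - B ** K) ** P ** (A - B ** K)) - P + Q + transpose K ** R ** K = 0"
    and K': "K' = matrix_inv (transpose B ** P ** B + (1 / g) *\<^sub>R R) ** transpose B ** P ** A"
    and c: "(\<not> invertible (P - Q - transpose K' ** R ** K') \<longrightarrow> c = 1) \<and>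
      (invertible (P - Q - transpose K' ** R ** K') \<longrightarrow>
        1 < c \<and> c < sqrt (sigma_min (P ** matrix_inv (P - Q - transpose K' ** R ** K'))))"
  shows "schur_stable (sqrt (g * c\<^sup>2) *\<^sub>R (A - B ** K'))"
proof -
  define N where "N = P - Q - transpose K' ** R ** K'"
  have decrease: "g * (((A - B ** K') *v x) \<bullet> (P *v ((A - B ** K') *v x))) \<le> x \<bullet> (N *v x)" for x
    unfolding N_def by (rule lqr_gain_decrease[OF Q R P g lyap K'])
  show ?thesis
  proof (cases "invertible N")
    case True
    have "transpose N = N"
      using P Q R by (simp add: N_def psd_def pos_def_def transpose_diff matrix_transpose_mul matrix_mul_assoc)
    moreover have "0 \<le> c" "c < sqrt (sigma_min (P ** matrix_inv N))"
      using True c by (simp_all add: N_def)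
    ultimately show ?thesis
      using schur_stable_below_sigma_min[OF P _ True g decrease] by blast
  next
    case False
    then have "c = 1"
      using c by (simp add: N_def)
    then show ?thesis
      using closed_loop_schur_stable_if_cost_decrease[OF obsv Q R P g decrease[unfolded N_def]] by simp
  qed
qed

lemma scaled_policy_iteration_schur_stable:
  fixes A Q :: "real^'n^'n" and B :: "real^'m^'n" and K :: "nat \<Rightarrow> real^'n^'m" and R :: "real^'m^'m"
    and P :: "nat \<Rightarrow> real^'n^'n" and g c :: "nat \<Rightarrow> real"
  assumes Q: "psd Q" and R: "pos_def R" and obsv: "observable A (msqrt Q)"
    and g: "\<And>j. j \<le> n \<Longrightarrow> 0 < g j" and g_Suc: "\<And>j. g (Suc j) = g j * (c (Suc j))\<^sup>2"
    and stable_0: "schur_stable (sqrt (g 0) *\<^sub>R (A - B ** K 0))"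
    and lyap: "\<And>j. j < n \<Longrightarrow>
      g j *\<^sub>R (transpose (A - B ** K j) ** P j ** (A - B ** K j)) - P j + Q + transpose (K j) ** R ** K j = 0"
    and gain: "\<And>j. j < n \<Longrightarrow>
      K (Suc j) = matrix_inv (transpose B ** P j ** B + (1 / g j) *\<^sub>R R) ** transpose B ** P j ** A"
    and scale: "\<And>j. j < n \<Longrightarrow>
      (\<not> invertible (P j - Q - transpose (K (Suc j)) ** R ** K (Suc j)) \<longrightarrow> c (Suc j) = 1) \<and>
      (invertible (P j - Q - transpose (K (Suc j)) ** R ** K (Suc j)) \<longrightarrow> 1 < c (Suc j) \<and>
        c (Suc j) < sqrt (sigma_min (P j ** matrix_inv (P j - Q - transpose (K (Suc j)) ** R ** K (Suc j)))))"
  shows "schur_stable (sqrt (g n) *\<^sub>R (A - B ** K n))"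
proof -
  have "schur_stable (sqrt (g j) *\<^sub>R (A - B ** K j))" if "j \<le> n" for j
    using that
  proof (induction j)
    case (Suc j)
    then have j: "j < n" "0 < g j"
      using g by simp_all
    then have "psd (P j)"
      using closed_loop_lyap_eq_pos_def[OF obsv Q R _ Suc.IH lyap] pos_def_imp_psd by simp
    then show ?case
      using lqr_step_schur_stable[OF Q R obsv _ j(2) lyap gain scale] j g_Suc by simp
  qed (rule stable_0)
  then show ?thesis
    by simp
qed

theorem theorem2:
  fixes A :: "real^'n^'n" and B :: "real^'m^'n" and Q :: "real^'n^'n" and R :: "real^'m^'m"
    and K :: "nat \<Rightarrow> real^'n^'m" and P :: "nat \<Rightarrow> real^'n^'n" and c :: "nat \<Rightarrow> real"
    and b :: real and i :: nat
  assumes Q: "psd Q" and R: "pos_def R"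
    and ctrb: "controllable A B" and obsv: "observable A (msqrt Q)"
    and c0: "c 0 = 1"
    and b: "b > spectral_radius (A - B ** K 0)"
    and Psol: "\<forall>j\<le>i. lyap_eq A B Q R b c j (K j) (P j)"
    and Kupd: "\<forall>j\<le>i. K (Suc j) =
                 matrix_inv (transpose B ** P j ** B + (b^2 / (\<Prod>l\<le>j. (c l)^2)) *\<^sub>R R)
                 ** transpose B ** P j ** A"
    and cupd: "\<forall>j\<le>i. (let Qj = P j - Q - transpose (K (Suc j)) ** R ** K (Suc j) in
                 (\<not> invertible Qj \<longrightarrow> c (Suc j) = 1) \<and>
                 (invertible Qj \<longrightarrow> 1 < c (Suc j) \<and>
                     c (Suc j) < sqrt (sigma_min (P j ** matrix_inv Qj))))"
  shows "\<exists>!X. pos_def X \<and> lyap_eq A B Q R b c (Suc i) (K (Suc i)) X"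
proof -
  define g where "g j = (\<Prod>l\<le>j. (c l)\<^sup>2) / b\<^sup>2" for j
  have "0 < b"
    using b spectral_radius_nonneg[of "A - B ** K 0"] by linarith
  have "c l \<noteq> 0" if "l \<le> Suc i" for l
    using that c0 cupd by (cases l) (auto simp: Let_def)
  then have "0 < (\<Prod>l\<le>j. (c l)\<^sup>2)" if "j \<le> Suc i" for j
    using that by (intro prod_pos) auto
  then have g_pos: "0 < g j" if "j \<le> Suc i" for j
    using that \<open>0 < b\<close> by (simp add: g_def)
  have stable: "schur_stable (sqrt (g (Suc i)) *\<^sub>R (A - B ** K (Suc i)))"
  proof (rule scaled_policy_iteration_schur_stable[OF Q R obsv g_pos, where P = P])
    show "g (Suc j) = g j * (c (Suc j))\<^sup>2" for j
      by (simp add: g_def)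
    have "sqrt (g 0) = 1 / b"
      using c0 \<open>0 < b\<close> by (simp add: g_def real_sqrt_divide)
    then show "schur_stable (sqrt (g 0) *\<^sub>R (A - B ** K 0))"
      using schur_stable_if_spectral_radius_less[OF b] by simp
    show "g j *\<^sub>R (transpose (A - B ** K j) ** P j ** (A - B ** K j)) - P j + Q
        + transpose (K j) ** R ** K j = 0" if "j < Suc i" for j
      using Psol that by (simp add: lyap_eq_def g_def)
    show "K (Suc j) = matrix_inv (transpose B ** P j ** B + (1 / g j) *\<^sub>R R) ** transpose B ** P j ** A"
      if "j < Suc i" for j
      using Kupd that by (simp add: g_def)
  qed (use cupd in \<open>auto simp: Let_def\<close>)
  have "\<exists>!X. pos_def X \<and> g (Suc i) *\<^sub>R (transpose (A - B ** K (Suc i)) ** X ** (A - B ** K (Suc i)))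
      - X + Q + transpose (K (Suc i)) ** R ** K (Suc i) = 0"
    by (rule closed_loop_lyap_eq_ex1_pos_def[OF obsv Q R g_pos[OF order_refl] stable])
  then show ?thesis
    unfolding lyap_eq_def g_def .
qed
end
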